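(* Let $c>0$ and $T>0$. For $t\in[0,T]$ and a function $h(\xi)$ on $\mathbb{R}^2$ define \[ \|h\|_{t}:=\left\|\frac{(1+|\xi|)^3 h(\xi)}{e^{-c|\xi|t}+e^{-c|\xi|(T-t)}}\right\|_{L^\infty(\mathbb{R}^2_\xi)}, \] and for $\hat f(\xi,s)$ defined for $s\in[0,T]$ set $\|\hat f\|:=\sup_{s\in[0,T]}\|\hat f(\cdot,s)\|_s$. There exists $K>0$ (independent of $T$) such that for any $\hat f$ with $\|\hat f\|<+\infty$ and all $t\in[0,T]$, \[ \left\|\int_0^t e^{-2c|\xi|(t-s)}|\xi|\,\hat f(\xi,s)\,ds\right\|_t\leqslant K\|\hat f\|. \]
   Context: $\xi\in\mathbb{R}^2$ is the Fourier variable. *)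

theory Defs
  imports "HOL-Analysis.Analysis" "HOL-Probability.Essential_Supremum"
begin

definition wnorm :: "real \<Rightarrow> real \<Rightarrow> real \<Rightarrow> (real^2 \<Rightarrow> complex) \<Rightarrow> ereal" where
  "wnorm c T t h = esssup lebesgue
     (\<lambda>\<xi>. ereal ((1 + norm \<xi>) ^ 3 * cmod (h \<xi>) /
                  (exp (- c * norm \<xi> * t) + exp (- c * norm \<xi> * (T - t)))))"

definition wnorm_total :: "real \<Rightarrow> real \<Rightarrow> (real^2 \<Rightarrow> real \<Rightarrow> complex) \<Rightarrow> ereal" where
  "wnorm_total c T f = (SUP s\<in>{0..T}. wnorm c T s (\<lambda>\<xi>. f \<xi> s))"

end

theory Submission
  imports Defs
begin

text \<open>Write \<open>w(s) = exp (-c|\<xi>|s) + exp (-c|\<xi>|(T - s))\<close> for the weight.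
  For \<open>s \<le> t\<close>, \<open>exp (-2c|\<xi>|(t - s)) w(s) \<le> exp (-c|\<xi>|(t - s)) w(t)\<close>:
  half of the decay of the kernel turns the weight at time \<open>s\<close> into the weight at time \<open>t\<close>.
  The other half integrates to \<open>\<integral>\<^sub>0\<^sup>t |\<xi>| exp (-c|\<xi>|(t - s)) ds \<le> 1/c\<close>,
  uniformly in \<open>\<xi>\<close> and \<open>T\<close>, so \<open>K = 1/c\<close> works.\<close>

definition wnorm_weight :: "real \<Rightarrow> real \<Rightarrow> real \<Rightarrow> real \<Rightarrow> real" where
  "wnorm_weight c T a t = exp (- c * a * t) + exp (- c * a * (T - t))"

lemma wnorm_weight_pos: "0 < wnorm_weight c T a t"
  unfolding wnorm_weight_def by (intro add_pos_pos) auto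

lemma kernel_wnorm_weight_le:
  assumes "0 \<le> c * a" "u \<le> t"
  shows "exp (- 2 * c * a * (t - u)) * wnorm_weight c T a u
         \<le> exp (- c * a * (t - u)) * wnorm_weight c T a t"
proof -
  have "exp (- 2 * c * a * (t - u)) * exp (- c * a * u) = exp (- c * a * (t - u)) * exp (- c * a * t)"
    by (simp add: mult_exp_exp algebra_simps)
  moreover have "exp (- 2 * c * a * (t - u)) * exp (- c * a * (T - u))
                 \<le> exp (- c * a * (t - u)) * exp (- c * a * (T - t))"
    using mult_nonneg_nonneg[OF assms(1), of "t - u"] assms(2)
    by (simp add: mult_exp_exp algebra_simps)
  ultimately show ?thesis
    unfolding wnorm_weight_def by (simp add: distrib_left)
qed

lemma set_integral_exp_kernel:
  fixes a c t :: real
  assumes "0 < c" "0 \<le> t"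
  shows "set_integrable lborel {0..t} (\<lambda>u. a * exp (- c * a * (t - u)))"
    and "(LINT u:{0..t}|lborel. a * exp (- c * a * (t - u))) = (1 - exp (- c * a * t)) / c"
proof -
  show "set_integrable lborel {0..t} (\<lambda>u. a * exp (- c * a * (t - u)))"
    by (intro borel_integrable_atLeastAtMost' continuous_intros)
  have "(LINT u:{0..t}|lborel. a * exp (- c * a * (t - u)))
        = exp (- c * a * (t - t)) / c - exp (- c * a * (t - 0)) / c"
    unfolding set_lebesgue_integral_def
  proof (rule integral_FTC_atLeastAtMost[OF assms(2)])
    fix x
    have "((\<lambda>u. exp (- c * a * (t - u)) / c) has_real_derivative
            exp (- c * a * (t - x)) * (c * a) / c) (at x within {0..t})"
      by (auto intro!: derivative_eq_intros)
    then show "((\<lambda>u. exp (- c * a * (t - u)) / c) has_vector_derivative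
                 a * exp (- c * a * (t - x))) (at x within {0..t})"
      using assms by (simp add: has_real_derivative_iff_has_vector_derivative mult.commute)
  qed (auto intro!: continuous_intros)
  then show "(LINT u:{0..t}|lborel. a * exp (- c * a * (t - u))) = (1 - exp (- c * a * t)) / c"
    by (simp add: diff_divide_distrib)
qed

lemma norm_duhamel_integral_le:
  fixes g :: "real \<Rightarrow> complex"
  assumes "0 < c" "0 \<le> a" "0 \<le> t" "0 \<le> B"
    and bound: "AE u in lborel. u \<in> {0..t} \<longrightarrow> cmod (g u) \<le> B * wnorm_weight c T a u"
  shows "cmod (LINT u:{0..t}|lborel. complex_of_real (exp (- 2 * c * a * (t - u)) * a) * g u)
         \<le> B / c * wnorm_weight c T a t"
proof -
  let ?F = "\<lambda>u. complex_of_real (exp (- 2 * c * a * (t - u)) * a) * g u"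
  define k where "k u = a * exp (- c * a * (t - u))" for u
  have k_int: "set_integrable lborel {0..t} k" and k_le: "(LINT u:{0..t}|lborel. k u) \<le> 1 / c"
    using set_integral_exp_kernel[OF assms(1,3), of a] assms(1) unfolding k_def[abs_def]
    by (auto simp: divide_right_mono)
  define C where "C = B * wnorm_weight c T a t"
  have C_nonneg: "0 \<le> C"
    unfolding C_def by (intro mult_nonneg_nonneg assms(4) less_imp_le[OF wnorm_weight_pos])
  have pointwise:
    "norm (indicator {0..t} u *\<^sub>R ?F u) \<le> indicator {0..t} u * (C * k u)"
    if "u \<in> {0..t} \<longrightarrow> cmod (g u) \<le> B * wnorm_weight c T a u" for u
  proof (cases "u \<in> {0..t}")
    case True
    have "norm (indicator {0..t} u *\<^sub>R ?F u) = a * (exp (- 2 * c * a * (t - u)) * cmod (g u))"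
      using True assms(2) by (simp add: norm_mult)
    also have "\<dots> \<le> a * (exp (- 2 * c * a * (t - u)) * (B * wnorm_weight c T a u))"
      using that True assms(2) by (intro mult_left_mono) auto
    also have "\<dots> = a * B * (exp (- 2 * c * a * (t - u)) * wnorm_weight c T a u)"
      by (simp add: ac_simps)
    also have "\<dots> \<le> a * B * (exp (- c * a * (t - u)) * wnorm_weight c T a t)"
      using kernel_wnorm_weight_le[of c a u t T] assms True
      by (intro mult_left_mono) auto
    finally show ?thesis
      using True unfolding C_def k_def by (simp add: ac_simps)
  qed simp
  have "cmod (LINT u:{0..t}|lborel. ?F u) \<le> (\<integral>u. norm (indicator {0..t} u *\<^sub>R ?F u) \<partial>lborel)"
    unfolding set_lebesgue_integral_def by (rule integral_norm_bound)
  also have "\<dots> \<le> (\<integral>u. indicator {0..t} u * (C * k u) \<partial>lborel)"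
  proof (rule integral_mono_AE')
    show "integrable lborel (\<lambda>u. indicator {0..t} u * (C * k u))"
      using k_int unfolding set_integrable_def by (simp add: mult.left_commute)
    show "AE u in lborel. norm (indicator {0..t} u *\<^sub>R ?F u) \<le> indicator {0..t} u * (C * k u)"
      using bound by (rule eventually_mono) (rule pointwise)
    show "AE u in lborel. 0 \<le> indicator {0..t} u * (C * k u)"
      using C_nonneg assms(2) by (intro AE_I2) (simp add: k_def)
  qed
  also have "\<dots> = C * (LINT u:{0..t}|lborel. k u)"
    unfolding set_lebesgue_integral_def by (simp add: mult.left_commute)
  also have "\<dots> \<le> C * (1 / c)"
    using k_le C_nonneg by (rule mult_left_mono)
  finally show ?thesis
    unfolding C_def by simp
qed

lemma weighted_norm_duhamel_integral_le:
  fixes f :: "real^2 \<Rightarrow> real \<Rightarrow> complex"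
  assumes "0 < c" "0 \<le> t" "t \<le> T" "0 \<le> m"
    and bound: "AE u in lborel. u \<in> {0..T} \<longrightarrow>
                  (1 + norm \<xi>) ^ 3 * cmod (f \<xi> u) \<le> m * wnorm_weight c T (norm \<xi>) u"
  shows "(1 + norm \<xi>) ^ 3 *
           cmod (LINT s:{0..t}|lborel. complex_of_real (exp (- 2 * c * norm \<xi> * (t - s)) * norm \<xi>) * f \<xi> s)
         \<le> m / c * wnorm_weight c T (norm \<xi>) t"
    (is "_ * cmod ?I \<le> _")
proof -
  define P where "P = (1 + norm \<xi>) ^ 3"
  have "P > 0"
    unfolding P_def by (simp add: add_pos_nonneg)
  have "AE u in lborel. u \<in> {0..t} \<longrightarrow> cmod (f \<xi> u) \<le> m / P * wnorm_weight c T (norm \<xi>) u"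
    using bound
    by (rule eventually_mono) (use assms(3) \<open>P > 0\<close> in \<open>auto simp: P_def field_simps\<close>)
  then have "cmod ?I \<le> m / P / c * wnorm_weight c T (norm \<xi>) t"
    using assms(1,2,4) \<open>P > 0\<close> by (intro norm_duhamel_integral_le) auto
  then have "P * cmod ?I \<le> P * (m / P / c * wnorm_weight c T (norm \<xi>) t)"
    using \<open>P > 0\<close> by (intro mult_left_mono) auto
  also have "\<dots> = m / c * wnorm_weight c T (norm \<xi>) t"
    using \<open>P > 0\<close> assms(1) by (simp add: field_simps)
  finally show ?thesis
    unfolding P_def .
qed

lemma wnorm_eq:
  "wnorm c T t h = esssup lebesgue
     (\<lambda>\<xi>. ereal ((1 + norm \<xi>) ^ 3 * cmod (h \<xi>) / wnorm_weight c T (norm \<xi>) t))"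
  by (simp add: wnorm_def wnorm_weight_def)

lemma wnorm_nonneg: "0 \<le> wnorm c T t h"
proof -
  let ?h = "\<lambda>\<xi>. ereal ((1 + norm \<xi>) ^ 3 * cmod (h \<xi>) / wnorm_weight c T (norm \<xi>) t)"
  have "0 \<le> esssup lebesgue ?h"
  proof (cases "?h \<in> borel_measurable lebesgue")
    case True
    have "esssup lebesgue (\<lambda>_::real^2. 0::ereal) = 0"
      by (rule esssup_const) simp
    moreover have "esssup lebesgue (\<lambda>_::real^2. 0::ereal) \<le> esssup lebesgue ?h"
      by (intro esssup_mono) (auto intro!: divide_nonneg_pos wnorm_weight_pos)
    ultimately show ?thesis
      by simp
  qed (simp add: esssup_non_measurable)
  then show ?thesis
    by (simp add: wnorm_eq)
qed

lemma AE_bound_of_wnorm_le: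
  assumes "wnorm c T t h \<le> ereal m"
  shows "AE \<xi> in lborel. (1 + norm \<xi>) ^ 3 * cmod (h \<xi>) \<le> m * wnorm_weight c T (norm \<xi>) t"
proof -
  have "AE \<xi> in lebesgue. ereal ((1 + norm \<xi>) ^ 3 * cmod (h \<xi>) / wnorm_weight c T (norm \<xi>) t) \<le> m"
    using esssup_AE by (rule eventually_mono) (rule order_trans[OF _ assms[unfolded wnorm_eq]])
  then show ?thesis
    unfolding AE_completion_iff
    by (rule eventually_mono) (simp add: divide_le_eq wnorm_weight_pos)
qed

lemma wnorm_le_of_AE_bound:
  assumes [measurable]: "h \<in> borel_measurable lborel"
    and "AE \<xi> in lborel. (1 + norm \<xi>) ^ 3 * cmod (h \<xi>) \<le> m * wnorm_weight c T (norm \<xi>) t"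
  shows "wnorm c T t h \<le> ereal m"
  unfolding wnorm_eq
proof (rule esssup_I)
  show "(\<lambda>\<xi>. ereal ((1 + norm \<xi>) ^ 3 * cmod (h \<xi>) / wnorm_weight c T (norm \<xi>) t))
          \<in> borel_measurable lebesgue"
    unfolding wnorm_weight_def by (intro measurable_completion) measurable
  show "AE \<xi> in lebesgue. ereal ((1 + norm \<xi>) ^ 3 * cmod (h \<xi>) / wnorm_weight c T (norm \<xi>) t) \<le> m"
    unfolding AE_completion_iff using assms(2)
    by (rule eventually_mono) (simp add: divide_le_eq wnorm_weight_pos)
qed

lemma wnorm_le_wnorm_total: "s \<in> {0..T} \<Longrightarrow> wnorm c T s (\<lambda>\<xi>. f \<xi> s) \<le> wnorm_total c T f"
  unfolding wnorm_total_def by (rule SUP_upper)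

lemma wnorm_total_nonneg: "0 \<le> T \<Longrightarrow> 0 \<le> wnorm_total c T f"
  using wnorm_nonneg wnorm_le_wnorm_total[of 0 T] by (rule order_trans) simp

lemma AE_AE_bound_of_wnorm_total_le:
  fixes f :: "real^2 \<Rightarrow> real \<Rightarrow> complex"
  assumes meas: "(\<lambda>p. if snd p \<in> {0..T} then f (fst p) (snd p) else 0) \<in> borel_measurable borel"
    and le: "wnorm_total c T f \<le> ereal m"
  shows "AE \<xi> in lborel. AE u in lborel.
           u \<in> {0..T} \<longrightarrow> (1 + norm \<xi>) ^ 3 * cmod (f \<xi> u) \<le> m * wnorm_weight c T (norm \<xi>) u"
proof -
  define g where "g p = (if snd p \<in> {0..T} then f (fst p) (snd p) else 0)" for p
  have [measurable]: "g \<in> borel_measurable (lborel \<Otimes>\<^sub>M lborel)"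
    using meas unfolding g_def[abs_def] lborel_prod by simp
  let ?P = "\<lambda>\<xi> u. u \<in> {0..T} \<longrightarrow>
             (1 + norm \<xi>) ^ 3 * cmod (g (\<xi>, u)) \<le> m * wnorm_weight c T (norm \<xi>) u"
  have PS: "pair_sigma_finite (lborel :: (real^2) measure) (lborel :: real measure)"
    by (simp add: pair_sigma_finite.intro lborel.sigma_finite_measure_axioms)
  have "{x \<in> space (lborel \<Otimes>\<^sub>M lborel). ?P (fst x) (snd x)} \<in> sets (lborel \<Otimes>\<^sub>M lborel)"
    unfolding wnorm_weight_def by measurable
  moreover have "AE u in lborel. AE \<xi> in lborel. ?P \<xi> u"
  proof (rule AE_I2)
    fix u
    show "AE \<xi> in lborel. ?P \<xi> u"
      using AE_bound_of_wnorm_le[OF order_trans[OF wnorm_le_wnorm_total le], of u]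
      by (cases "u \<in> {0..T}") (auto simp: g_def)
  qed
  ultimately have "AE \<xi> in lborel. AE u in lborel. ?P \<xi> u"
    using pair_sigma_finite.AE_commute[OF PS, of ?P] by blast
  then show ?thesis
    by (simp add: g_def)
qed

lemma duhamel_integral_measurable:
  fixes f :: "real^2 \<Rightarrow> real \<Rightarrow> complex"
  assumes meas: "(\<lambda>p. if snd p \<in> {0..T} then f (fst p) (snd p) else 0) \<in> borel_measurable borel"
    and "t \<le> T"
  shows "(\<lambda>\<xi>. LINT s:{0..t}|lborel.
            complex_of_real (exp (- 2 * c * norm \<xi> * (t - s)) * norm \<xi>) * f \<xi> s) \<in> borel_measurable lborel"
proof -
  define g where "g p = (if snd p \<in> {0..T} then f (fst p) (snd p) else 0)" for p
  have [measurable]: "g \<in> borel_measurable (lborel \<Otimes>\<^sub>M lborel)"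
    using meas unfolding g_def[abs_def] lborel_prod by simp
  have "(LINT s:{0..t}|lborel. complex_of_real (exp (- 2 * c * norm \<xi> * (t - s)) * norm \<xi>) * f \<xi> s)
        = (\<integral>s. indicator {0..t} s *\<^sub>R
              (complex_of_real (exp (- 2 * c * norm \<xi> * (t - s)) * norm \<xi>) * g (\<xi>, s)) \<partial>lborel)"
    for \<xi>
    unfolding set_lebesgue_integral_def using assms(2)
    by (intro Bochner_Integration.integral_cong) (auto simp: g_def indicator_def)
  then show ?thesis
    by simp
qed

theorem lemma8:
  fixes c :: real
  assumes "c > 0"
  shows "\<exists>K>0. \<forall>T>0. \<forall>f :: real^2 \<Rightarrow> real \<Rightarrow> complex.
           (\<lambda>p. if snd p \<in> {0..T} then f (fst p) (snd p) else 0) \<in> borel_measurable borel \<longrightarrow>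
           wnorm_total c T f < \<infinity> \<longrightarrow>
           (\<forall>t\<in>{0..T}.
              wnorm c T t (\<lambda>\<xi>. LINT s:{0..t}|lborel.
                   complex_of_real (exp (- 2 * c * norm \<xi> * (t - s)) * norm \<xi>) * f \<xi> s)
              \<le> ereal K * wnorm_total c T f)"
proof (intro exI[of _ "1/c"] conjI allI impI ballI)
  show "1/c > 0"
    using assms by simp
  fix T :: real and f :: "real^2 \<Rightarrow> real \<Rightarrow> complex" and t :: real
  assume "T > 0"
    and meas: "(\<lambda>p. if snd p \<in> {0..T} then f (fst p) (snd p) else 0) \<in> borel_measurable borel"
    and "wnorm_total c T f < \<infinity>" and t: "t \<in> {0..T}"
  then obtain m where m: "wnorm_total c T f = ereal m" and "0 \<le> m"
    using wnorm_total_nonneg[of T c f] by (cases "wnorm_total c T f") auto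
  let ?I = "\<lambda>\<xi>. LINT s:{0..t}|lborel.
             complex_of_real (exp (- 2 * c * norm \<xi> * (t - s)) * norm \<xi>) * f \<xi> s"
  have "AE \<xi> in lborel. AE u in lborel.
          u \<in> {0..T} \<longrightarrow> (1 + norm \<xi>) ^ 3 * cmod (f \<xi> u) \<le> m * wnorm_weight c T (norm \<xi>) u"
    using AE_AE_bound_of_wnorm_total_le[OF meas] m by simp
  then have "AE \<xi> in lborel. (1 + norm \<xi>) ^ 3 * cmod (?I \<xi>) \<le> m / c * wnorm_weight c T (norm \<xi>) t"
    by (rule eventually_mono)
      (rule weighted_norm_duhamel_integral_le[OF assms _ _ \<open>0 \<le> m\<close>], use t in auto)
  with duhamel_integral_measurable[OF meas] t have "wnorm c T t ?I \<le> ereal (m / c)"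
    by (intro wnorm_le_of_AE_bound) auto
  then show "wnorm c T t ?I \<le> ereal (1/c) * wnorm_total c T f"
    by (simp add: m)
qed

end
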